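(* Let $\alpha\ge0$ and $p\ge\dfrac{9+3\alpha+\sqrt{9\alpha^2+30\alpha+33}}{4}$. Then $p>\alpha+2$ and $F_{p,\alpha}(r)\le0$ for all $r\in(0,1]$, where $$F_{p,\alpha}(r)=r^{\,p-4-\frac{3\alpha}{2}}\int_0^{\frac{2r}{1+r}}\frac{t^{\frac{\alpha+2}{p}-1}}{(1-t)^{\frac{\alpha+2}{p}}}\,dt-\int_0^1\frac{t^{\frac{\alpha+2}{p}-1}}{(1-t)^{\frac{\alpha+2}{p}}}\,dt .$$ *)

theory Defs
  imports "HOL-Analysis.Analysis"
begin

text \<open>Integrand t^(beta-1) / (1-t)^beta with beta = (alpha+2)/p, integrated
  (Lebesgue) over [0,x]; the integrals are improper at 0 and at 1.\<close>

definition kern :: "real \<Rightarrow> real \<Rightarrow> real \<Rightarrow> real" where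
  "kern p \<alpha> t = t powr ((\<alpha> + 2) / p - 1) / (1 - t) powr ((\<alpha> + 2) / p)"

definition F :: "real \<Rightarrow> real \<Rightarrow> real \<Rightarrow> real" where
  "F p \<alpha> r =
     r powr (p - 4 - 3 * \<alpha> / 2) * (LBINT t:{0..2 * r / (1 + r)}. kern p \<alpha> t)
     - (LBINT t:{0..1}. kern p \<alpha> t)"

end

theory Submission
  imports Defs
begin

text \<open>
  Put b = (alpha + 2) / p and a = p - 4 - 3 alpha / 2. Once p > alpha + 2 we have 0 < b < 1, the
  kernel is the Beta integrand t^(b-1) (1-t)^(-b), and G(x) denotes its integral over [0, x].
  Since x = 2r / (1 + r) means r = x / (2 - x), the claim is Phi(x) <= Phi(1) for
  Phi(x) = (x / (2 - x))^a G(x), so it suffices that Phi is nondecreasing on (0, 1].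
  Up to a positive factor Phi'(x) is a G(x) + x (2 - x) / 2 G'(x). Its sign is settled by comparing
  -a G with (2 - x) / 2 (x / (1 - x))^b: both vanish at 0, and the second grows faster
  whenever -2a <= 3b - 1. That condition is the quadratic inequality
  2p^2 - (9 + 3 alpha) p + 3 alpha + 6 >= 0, whose larger root is the threshold on p.
\<close>

lemma quadratic_nonneg_ge_larger_root:
  fixes A B C p :: real
  assumes "0 < A" and "0 \<le> B\<^sup>2 - 4 * A * C"
    and "(- B + sqrt (B\<^sup>2 - 4 * A * C)) / (2 * A) \<le> p"
  shows "0 \<le> A * p\<^sup>2 + B * p + C"
proof -
  define D where "D = B\<^sup>2 - 4 * A * C"
  have "sqrt D \<le> 2 * A * p + B"
    using assms by (simp add: D_def field_simps)
  then have "D \<le> (2 * A * p + B)\<^sup>2"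
    by (rule sqrt_le_D)
  also have "(2 * A * p + B)\<^sup>2 = 4 * A * (A * p\<^sup>2 + B * p + C) + D"
    by (simp add: D_def power2_eq_square algebra_simps)
  finally show ?thesis
    using assms(1) by (simp add: zero_le_mult_iff)
qed

lemma alpha_plus_two_lt_threshold:
  fixes \<alpha> :: real
  assumes "0 \<le> \<alpha>"
  shows "\<alpha> + 2 < (9 + 3 * \<alpha> + sqrt (9 * \<alpha>\<^sup>2 + 30 * \<alpha> + 33)) / 4"
proof -
  have "(\<alpha> + 1)\<^sup>2 \<le> 9 * (\<alpha> + 1)\<^sup>2"
    by simp
  also have "\<dots> < 9 * \<alpha>\<^sup>2 + 30 * \<alpha> + 33"
    using assms by (simp add: power2_eq_square algebra_simps)
  finally have "(\<alpha> + 1)\<^sup>2 < 9 * \<alpha>\<^sup>2 + 30 * \<alpha> + 33" .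
  then have "\<alpha> + 1 < sqrt (9 * \<alpha>\<^sup>2 + 30 * \<alpha> + 33)"
    using assms real_less_rsqrt by auto
  then show ?thesis by simp
qed

lemma threshold_quadratic_nonneg:
  fixes \<alpha> p :: real
  assumes "0 \<le> \<alpha>" and "(9 + 3 * \<alpha> + sqrt (9 * \<alpha>\<^sup>2 + 30 * \<alpha> + 33)) / 4 \<le> p"
  shows "0 \<le> 2 * p\<^sup>2 - (9 + 3 * \<alpha>) * p + (3 * \<alpha> + 6)"
proof -
  have disc: "(- (9 + 3 * \<alpha>))\<^sup>2 - 4 * 2 * (3 * \<alpha> + 6) = 9 * \<alpha>\<^sup>2 + 30 * \<alpha> + 33"
    by (simp add: power2_eq_square algebra_simps)
  have "0 \<le> 2 * p\<^sup>2 + (- (9 + 3 * \<alpha>)) * p + (3 * \<alpha> + 6)"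
    by (rule quadratic_nonneg_ge_larger_root) (use assms in \<open>simp_all only: disc, auto\<close>)
  then show ?thesis by (simp add: algebra_simps)
qed

lemma exponent_condition_iff:
  fixes \<alpha> p :: real
  assumes "0 < p"
  shows "- 2 * (p - 4 - 3 * \<alpha> / 2) \<le> 3 * ((\<alpha> + 2) / p) - 1
    \<longleftrightarrow> 0 \<le> 2 * p\<^sup>2 - (9 + 3 * \<alpha>) * p + (3 * \<alpha> + 6)"
  using assms by (simp add: field_simps power2_eq_square) linarith

definition beta_kernel :: "real \<Rightarrow> real \<Rightarrow> real" where
  "beta_kernel b t = t powr (b - 1) / (1 - t) powr b"

lemma kern_eq_beta_kernel: "kern p \<alpha> = beta_kernel ((\<alpha> + 2) / p)"
  by (simp add: fun_eq_iff kern_def beta_kernel_def)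

lemma beta_kernel_nonneg: "0 \<le> beta_kernel b t"
  by (simp add: beta_kernel_def)

lemma odds_powr_eq_mult_beta_kernel:
  fixes b t :: real
  assumes "0 < t" and "t < 1"
  shows "(t / (1 - t)) powr b = t * beta_kernel b t"
  using assms by (simp add: beta_kernel_def powr_divide powr_mult_base)

lemma has_real_derivative_odds_powr:
  fixes b t :: real
  assumes "0 < t" and "t < 1"
  shows "((\<lambda>t. (t / (1 - t)) powr b) has_real_derivative b * beta_kernel b t / (1 - t)) (at t)"
proof -
  have ratio': "((\<lambda>t. t / (1 - t)) has_real_derivative 1 / (1 - t)\<^sup>2) (at t)"
    using assms by (auto intro!: derivative_eq_intros simp: field_simps power2_eq_square)
  then have "((\<lambda>t. (t / (1 - t)) powr b) has_real_derivative
      b * (t / (1 - t)) powr (b - 1) * (1 / (1 - t)\<^sup>2)) (at t)"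
    using DERIV_fun_powr[OF ratio', of b] assms by simp
  moreover have "(t / (1 - t)) powr (b - 1) = t powr (b - 1) / (1 - t) powr b * (1 - t)"
    using assms by (simp add: powr_divide powr_diff)
  ultimately show ?thesis
    using assms by (simp add: beta_kernel_def power2_eq_square)
qed

lemma set_integrable_beta_kernel:
  assumes "0 < b" and "b < 1"
  shows "set_integrable lborel {0..1} (beta_kernel b)"
proof -
  have "beta_kernel b = (\<lambda>t. t powr (b - 1) * (1 - t) powr ((1 - b) - 1))"
    by (simp add: fun_eq_iff beta_kernel_def powr_minus divide_inverse)
  then show ?thesis
    using integrable_Beta[of b "1 - b"] assms by simp
qed

lemma beta_kernel_integrable_on:
  assumes "0 < b" and "b < 1"
  shows "beta_kernel b integrable_on {0..1}"
  using set_integrable_beta_kernel[OF assms] by (rule set_borel_integral_eq_integral(1))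

lemma set_integral_beta_kernel:
  assumes "0 < b" "b < 1" and "0 \<le> x" "x \<le> 1"
  shows "(LBINT t:{0..x}. beta_kernel b t) = integral {0..x} (beta_kernel b)"
proof (rule set_borel_integral_eq_integral(2))
  show "set_integrable lborel {0..x} (beta_kernel b)"
    by (rule set_integrable_subset[OF set_integrable_beta_kernel]) (use assms in auto)
qed

lemma continuous_on_integral_beta_kernel:
  assumes "0 < b" and "b < 1"
  shows "continuous_on {0..1} (\<lambda>x. integral {0..x} (beta_kernel b))"
  using beta_kernel_integrable_on[OF assms] by (rule indefinite_integral_continuous_1)

lemma has_real_derivative_integral_beta_kernel:
  assumes b: "0 < b" "b < 1" and "0 < x" "x < 1"
  shows "((\<lambda>u. integral {0..u} (beta_kernel b)) has_real_derivative beta_kernel b x) (at x)"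
proof -
  have "isCont (beta_kernel b) x"
    using assms unfolding beta_kernel_def[abs_def] by (intro continuous_intros) auto
  then have "((\<lambda>u. integral {0..u} (beta_kernel b)) has_vector_derivative beta_kernel b x)
      (at x within {0..1})"
    using integral_has_vector_derivative_continuous_at[OF beta_kernel_integrable_on[OF b], of x "{}"]
      assms by (simp add: continuous_at_imp_continuous_at_within)
  moreover have "at x within {0..1} = at x"
    using assms by (intro at_within_interior) auto
  ultimately show ?thesis
    by (simp add: has_real_derivative_iff_has_vector_derivative)
qed

lemma integral_beta_kernel_le:
  fixes b c x :: real
  assumes b: "0 < b" "b < 1" and c: "2 * c \<le> 3 * b - 1" and x: "0 < x" "x < 1"
  shows "c * integral {0..x} (beta_kernel b) \<le> x * (2 - x) / 2 * beta_kernel b x"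
proof -
  define G where "G u = integral {0..u} (beta_kernel b)" for u
  define h where "h t = (t / (1 - t)) powr b" for t
  define \<psi> where "\<psi> t = (2 - t) / 2 * h t - c * G t" for t
  have "\<psi> 0 \<le> \<psi> x"
  proof (rule DERIV_nonneg_imp_increasing_open[of 0 x \<psi>])
    fix t assume t: "0 < t" "t < x"
    let ?D = "beta_kernel b t * ((1 - b) * (1 - t)\<^sup>2 + b * t\<^sup>2 + (3 * b - 1 - 2 * c) * (1 - t))
      / (2 * (1 - t))"
    have h': "(h has_real_derivative b * beta_kernel b t / (1 - t)) (at t)"
      unfolding h_def using t x by (intro has_real_derivative_odds_powr) auto
    have G': "(G has_real_derivative beta_kernel b t) (at t)"
      unfolding G_def using t x by (intro has_real_derivative_integral_beta_kernel b) auto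
    have ht: "h t = t * beta_kernel b t"
      using t x by (simp add: h_def odds_powr_eq_mult_beta_kernel)
    have "((\<lambda>t. (2 - t) / 2) has_real_derivative - 1 / 2) (at t)"
      by (auto intro!: derivative_eq_intros)
    from DERIV_diff[OF DERIV_mult'[OF this h'] DERIV_cmult[OF G']]
    have "(\<psi> has_real_derivative ?D) (at t)"
      unfolding \<psi>_def[abs_def]
      by (rule DERIV_cong) (use t x in \<open>simp add: ht field_simps power2_eq_square\<close>)
    moreover have "0 \<le> ?D"
      using t x b c
      by (intro divide_nonneg_pos mult_nonneg_nonneg add_nonneg_nonneg beta_kernel_nonneg) auto
    ultimately show "\<exists>y. (\<psi> has_real_derivative y) (at t) \<and> 0 \<le> y" by blast
  next
    have "continuous_on {0..x} G"
      using continuous_on_subset[OF continuous_on_integral_beta_kernel[OF b]] x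
      by (auto simp: G_def)
    moreover have "continuous_on {0..x} h"
      unfolding h_def using x b by (intro continuous_on_powr' continuous_intros) auto
    ultimately show "continuous_on {0..x} \<psi>"
      unfolding \<psi>_def by (intro continuous_intros) auto
  qed (use x in simp)
  moreover have "\<psi> 0 = 0"
    by (simp add: \<psi>_def h_def G_def)
  moreover have "\<psi> x = x * (2 - x) / 2 * beta_kernel b x - c * G x"
    using x by (simp add: \<psi>_def h_def odds_powr_eq_mult_beta_kernel)
  ultimately show ?thesis
    by (simp add: G_def)
qed

lemma powr_mult_integral_beta_kernel_le:
  fixes a b x :: real
  assumes b: "0 < b" "b < 1" and a: "- 2 * a \<le> 3 * b - 1" and x: "0 < x" "x \<le> 1"
  shows "(x / (2 - x)) powr a * integral {0..x} (beta_kernel b) \<le> integral {0..1} (beta_kernel b)"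
proof -
  define G where "G u = integral {0..u} (beta_kernel b)" for u
  define q where "q s = s / (2 - s)" for s :: real
  define \<Phi> where "\<Phi> s = q s powr a * G s" for s
  have "\<Phi> x \<le> \<Phi> 1"
  proof (rule DERIV_nonneg_imp_increasing_open[of x 1 \<Phi>])
    fix s assume s: "x < s" "s < 1"
    let ?D = "q s powr a * (2 / (s * (2 - s))) * (a * G s + s * (2 - s) / 2 * beta_kernel b s)"
    have q_pos: "0 < q s"
      using s x by (simp add: q_def)
    have q': "(q has_real_derivative 2 / (2 - s)\<^sup>2) (at s)"
      unfolding q_def[abs_def] using s
      by (auto intro!: derivative_eq_intros simp: field_simps power2_eq_square)
    have "q s powr (a - 1) = q s powr a / q s"
      using q_pos by (simp add: powr_diff)
    then have pow': "((\<lambda>s. q s powr a) has_real_derivative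
        a * (q s powr a / q s) * (2 / (2 - s)\<^sup>2)) (at s)"
      using DERIV_fun_powr[OF q' q_pos, of a] by simp
    have G': "(G has_real_derivative beta_kernel b s) (at s)"
      unfolding G_def using s x by (intro has_real_derivative_integral_beta_kernel b) auto
    from DERIV_mult'[OF pow' G']
    have "(\<Phi> has_real_derivative
        q s powr a * beta_kernel b s + a * (q s powr a / q s) * (2 / (2 - s)\<^sup>2) * G s) (at s)"
      unfolding \<Phi>_def[abs_def] .
    moreover have
      "q s powr a * beta_kernel b s + a * (q s powr a / q s) * (2 / (2 - s)\<^sup>2) * G s = ?D"
      using s x by (simp add: q_def field_simps) (simp add: power2_eq_square algebra_simps)
    ultimately have "(\<Phi> has_real_derivative ?D) (at s)"
      by simp
    moreover have "0 \<le> ?D"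
      using integral_beta_kernel_le[OF b, of "- a" s] a s x unfolding G_def
      by (intro mult_nonneg_nonneg) auto
    ultimately show "\<exists>y. (\<Phi> has_real_derivative y) (at s) \<and> 0 \<le> y" by blast
  next
    have "continuous_on {x..1} G"
      using continuous_on_subset[OF continuous_on_integral_beta_kernel[OF b]] x
      by (auto simp: G_def)
    then show "continuous_on {x..1} \<Phi>"
      unfolding \<Phi>_def q_def using x by (intro continuous_intros) auto
  qed (use x in simp)
  then show ?thesis
    by (simp add: \<Phi>_def q_def G_def)
qed

theorem mainTheorem5:
  fixes \<alpha> p :: real
  assumes "\<alpha> \<ge> 0"
    and "p \<ge> (9 + 3 * \<alpha> + sqrt (9 * \<alpha>^2 + 30 * \<alpha> + 33)) / 4"
  shows "p > \<alpha> + 2 \<and> (\<forall>r\<in>{0<..1}. F p \<alpha> r \<le> 0)"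
proof -
  have p_gt: "\<alpha> + 2 < p"
    using alpha_plus_two_lt_threshold[OF assms(1)] assms(2) by linarith
  define b where "b = (\<alpha> + 2) / p"
  define a where "a = p - 4 - 3 * \<alpha> / 2"
  have b: "0 < b" "b < 1"
    using p_gt assms(1) by (auto simp: b_def field_simps)
  have a: "- 2 * a \<le> 3 * b - 1"
    unfolding a_def b_def using p_gt assms(1) threshold_quadratic_nonneg[OF assms]
    by (subst exponent_condition_iff) auto
  have "F p \<alpha> r \<le> 0" if "0 < r" "r \<le> 1" for r
  proof -
    define x where "x = 2 * r / (1 + r)"
    have x: "0 < x" "x \<le> 1" "x / (2 - x) = r"
      using that by (auto simp: x_def field_simps)
    have "F p \<alpha> r = (x / (2 - x)) powr a * integral {0..x} (beta_kernel b)
        - integral {0..1} (beta_kernel b)"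
      unfolding F_def kern_eq_beta_kernel x_def[symmetric] a_def[symmetric] b_def[symmetric]
      using x by (simp add: set_integral_beta_kernel[OF b])
    then show ?thesis
      using powr_mult_integral_beta_kernel_le[OF b a x(1,2)] by simp
  qed
  then show ?thesis
    using p_gt by auto
qed

end
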